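(* Let $p$ be a singular point of $\varphi$ with data $(a,b)$, $U_p$ a disc neighbourhood of $p$ with parameter $s$, and $(z,w)$ coordinates on $X$ as in the context. Let $\varphi_k$ be a $k$-th order deformation of $\varphi$ whose restriction to $U_p\times\mathrm{Spec}\,\mathbb C[t]/t^{k+1}$ is $(z,w)=(s^a+\sum_{j=1}^k\sum_{i=0}^{a-2}t^jc_{a-i,j}s^i,\ s^b+s^{b+1}g_0(s)+\sum_{j=1}^kt^jg_j(s))$. Then the set of equivalence classes of $(k+1)$-th order analytic deformations of $\varphi$ on $U_p$ reducing to $\varphi_k|_{U_p}$ is naturally in bijection with the set of sections over $U_p$ of the sheaf $\mathcal O_{U_p}\cdot\partial_w\oplus i_*V_p\cdot\partial_z$, the bijection sending the deformation $(z,w)=(s^a+\sum_{j=1}^{k+1}\sum_{i=0}^{a-2}t^jc_{a-i,j}s^i,\ s^b+s^{b+1}g_0(s)+\sum_{j=1}^{k+1}t^jg_j(s))$ to $g_{k+1}(s)\partial_w+(\sum_{i=0}^{a-2}c_{a-i,k+1}s^i)\partial_z$.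
   Context: $\varphi\colon C\to X$ is a holomorphic map from a complete integral curve to a smooth complex surface, and $p$ is a smooth point of $C$ where $d\varphi=0$, with local parameter $s$ on a disc neighbourhood $U_p$ and coordinates $(z,w)$ on $X$ centered at $\varphi(p)$ such that $\varphi=(s^a,s^b+s^{b+1}g_0(s))$, $2\le a<b$, $a\nmid b$, $g_0$ convergent; $c_{a-i,j}\in\mathbb C$ and $g_j$ are holomorphic on $U_p$. Two $(k+1)$-th order local deformations on $U_p$ reducing to $\varphi_k|_{U_p}$ are equivalent if they differ by precomposition with an automorphism of the ringed space $U_p\times\mathrm{Spec}\,\mathbb C[t]/t^{k+2}$ which is the identity over $\mathbb C[t]/t^{k+1}$. $V_p=\{c_a+c_{a-1}s+\cdots+c_2s^{a-2}: c_i\in\mathbb C\}$ is regarded as a constant sheaf on the point $p$, $i\colon\{p\}\to U_p$ the inclusion, and $\partial_z,\partial_w$ are the pullbacks by $\varphi$ of the coordinate vector fields. *)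

theory Defs
  imports "HOL-Complex_Analysis.Complex_Analysis" "HOL-Computational_Algebra.Polynomial"
begin

text \<open>A local deformation of order N on U (over C[t]/t^(N+1)) is a pair (Z,W) of
  families of holomorphic functions; Z j is the coefficient of t^j.\<close>

type_synonym tfam = "nat \<Rightarrow> complex \<Rightarrow> complex"

text \<open>Precomposition of sum_j t^j G_j(s) with the automorphism s |-> s + t^N h(s)
  (identity modulo t^N): coefficient of t^n of sum_j t^j G_j(s + t^N h(s)),
  expanded by Taylor's formula (exact since t is nilpotent).\<close>
definition tcomp :: "nat \<Rightarrow> (complex \<Rightarrow> complex) \<Rightarrow> tfam \<Rightarrow> tfam" where
  "tcomp N h G n s =
     (\<Sum>j\<le>n. \<Sum>m\<le>n. if j + N * m = n then h s ^ m * (deriv ^^ m) (G j) s / fact m else 0)"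

definition local_defs :: "complex set \<Rightarrow> nat \<Rightarrow> tfam \<Rightarrow> tfam \<Rightarrow> (tfam \<times> tfam) set" where
  "local_defs U k Zk Wk =
     {(Z, W). (\<forall>j\<le>Suc k. Z j holomorphic_on U \<and> W j holomorphic_on U)
            \<and> (\<forall>j\<le>k. \<forall>s\<in>U. Z j s = Zk j s \<and> W j s = Wk j s)
            \<and> (\<forall>j>Suc k. Z j = (\<lambda>_. 0) \<and> W j = (\<lambda>_. 0))}"

text \<open>Two such deformations are equivalent if they differ by precomposition with an
  automorphism of U x Spec C[t]/t^(k+2) which is the identity over C[t]/t^(k+1),
  i.e. s |-> s + t^(k+1) h(s) with h holomorphic on U.\<close>
definition def_equiv :: "complex set \<Rightarrow> nat \<Rightarrow> tfam \<Rightarrow> tfam \<Rightarrow> ((tfam \<times> tfam) \<times> (tfam \<times> tfam)) set" where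
  "def_equiv U k Zk Wk =
     {(D1, D2). D1 \<in> local_defs U k Zk Wk \<and> D2 \<in> local_defs U k Zk Wk \<and>
        (\<exists>h. h holomorphic_on U \<and>
           (\<forall>n\<le>Suc k. \<forall>s\<in>U. tcomp (Suc k) h (fst D1) n s = fst D2 n s
                            \<and> tcomp (Suc k) h (snd D1) n s = snd D2 n s))}"

text \<open>Sections over U of O_U d_w (+) i_* V_p d_z: a holomorphic function on U
  (normalised to 0 off U) and a polynomial of degree at most a-2.\<close>
definition sections :: "complex set \<Rightarrow> nat \<Rightarrow> ((complex \<Rightarrow> complex) \<times> complex poly) set" where
  "sections U a = {(g, q). g holomorphic_on U \<and> (\<forall>s. s \<notin> U \<longrightarrow> g s = 0) \<and> degree q \<le> a - 2}"

end

theory Submission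
  imports Defs
begin

text \<open>The automorphism \<open>s \<mapsto> s + t^(k+1) h(s)\<close> leaves the coefficients of
  \<open>t^j\<close>, \<open>j \<le> k\<close>, unchanged and adds \<open>h Z\<^sub>0' = a s^(a-1) h\<close> and \<open>h W\<^sub>0'\<close> to those of
  \<open>t^(k+1)\<close>. Every holomorphic function is uniquely a polynomial of degree \<open>\<le> a - 2\<close>
  plus \<open>s^(a-1)\<close> times a holomorphic function, so each class contains exactly one
  extension whose new \<open>z\<close>-coefficient is such a polynomial; its new \<open>w\<close>-coefficient
  is then an arbitrary holomorphic function.\<close>

lemma tcomp_Suc_le:
  assumes "n \<le> Suc k"
  shows "tcomp (Suc k) h G n s = G n s + (if n = Suc k then h s * deriv (G 0) s else 0)"
proof -
  have "(if j + Suc k * m = n then h s ^ m * (deriv ^^ m) (G j) s / fact m else 0) =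
        (if m = 0 then if j = n then G n s else 0 else 0) +
        (if m = 1 \<and> n = Suc k then if j = 0 then h s * deriv (G 0) s else 0 else 0)" for j m
  proof -
    have "j + Suc k * m \<noteq> n" if "m \<ge> 2"
      using mult_le_mono2[OF that, of "Suc k"] assms by simp
    then show ?thesis using assms by (cases "m = 0 \<or> m = 1") auto
  qed
  then have "tcomp (Suc k) h G n s = (\<Sum>j\<le>n. \<Sum>m\<le>n.
        (if m = 0 then if j = n then G n s else 0 else 0) +
        (if m = 1 \<and> n = Suc k then if j = 0 then h s * deriv (G 0) s else 0 else 0))"
    unfolding tcomp_def by presburger
  also have "\<dots> = G n s + (if n = Suc k then h s * deriv (G 0) s else 0)"
    by (cases "n = Suc k") (simp_all add: sum.distrib)
  finally show ?thesis .
qed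

lemma deriv_local_defs_0:
  assumes "D \<in> local_defs U k Zk Wk" "open U" "s \<in> U"
  shows "deriv (fst D 0) s = deriv (Zk 0) s" "deriv (snd D 0) s = deriv (Wk 0) s"
proof -
  have "\<forall>\<^sub>F x in nhds s. fst D 0 x = Zk 0 x \<and> snd D 0 x = Wk 0 x"
    using eventually_nhds_in_open[OF assms(2,3)] assms(1)
    by (auto simp: local_defs_def elim!: eventually_mono)
  then show "deriv (fst D 0) s = deriv (Zk 0) s" "deriv (snd D 0) s = deriv (Wk 0) s"
    by (auto intro!: deriv_cong_ev elim: eventually_mono)
qed

lemma def_equiv_iff:
  assumes "open U" and D: "D1 \<in> local_defs U k Zk Wk" "D2 \<in> local_defs U k Zk Wk"
  shows "(D1, D2) \<in> def_equiv U k Zk Wk \<longleftrightarrow>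
    (\<exists>h. h holomorphic_on U \<and> (\<forall>s\<in>U.
       fst D2 (Suc k) s = fst D1 (Suc k) s + h s * deriv (Zk 0) s \<and>
       snd D2 (Suc k) s = snd D1 (Suc k) s + h s * deriv (Wk 0) s))"
proof -
  have low: "fst D1 n s = fst D2 n s \<and> snd D1 n s = snd D2 n s" if "n \<le> k" "s \<in> U" for n s
    using D that by (auto simp: local_defs_def)
  have "tcomp (Suc k) h (fst D1) n s = fst D1 n s + (if n = Suc k then h s * deriv (Zk 0) s else 0)"
       "tcomp (Suc k) h (snd D1) n s = snd D1 n s + (if n = Suc k then h s * deriv (Wk 0) s else 0)"
    if "n \<le> Suc k" "s \<in> U" for h n s
    using tcomp_Suc_le[OF that(1)] deriv_local_defs_0[OF D(1) assms(1) that(2)] by simp_all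
  then show ?thesis
    using D low unfolding def_equiv_def by (auto simp: le_Suc_eq)
qed

lemma equiv_def_equiv:
  assumes "open U"
  shows "equiv (local_defs U k Zk Wk) (def_equiv U k Zk Wk)"
proof (rule equivI)
  show "def_equiv U k Zk Wk \<subseteq> local_defs U k Zk Wk \<times> local_defs U k Zk Wk"
    by (auto simp: def_equiv_def)
  show "refl_on (local_defs U k Zk Wk) (def_equiv U k Zk Wk)"
    by (rule refl_onI) (auto simp: def_equiv_iff[OF assms] intro!: exI[of _ "\<lambda>_. 0"])
  show "sym (def_equiv U k Zk Wk)"
  proof (rule symI)
    fix D1 D2 assume "(D1, D2) \<in> def_equiv U k Zk Wk"
    moreover from this have "D1 \<in> local_defs U k Zk Wk" "D2 \<in> local_defs U k Zk Wk"
      by (auto simp: def_equiv_def)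
    ultimately show "(D2, D1) \<in> def_equiv U k Zk Wk"
      apply (clarsimp simp: def_equiv_iff[OF assms])
      subgoal for h by (rule exI[of _ "\<lambda>s. - h s"]) (auto intro: holomorphic_intros)
      done
  qed
  show "trans (def_equiv U k Zk Wk)"
  proof (rule transI)
    fix D1 D2 D3
    assume "(D1, D2) \<in> def_equiv U k Zk Wk" "(D2, D3) \<in> def_equiv U k Zk Wk"
    moreover from this have "D1 \<in> local_defs U k Zk Wk" "D2 \<in> local_defs U k Zk Wk"
        "D3 \<in> local_defs U k Zk Wk"
      by (auto simp: def_equiv_def)
    ultimately show "(D1, D3) \<in> def_equiv U k Zk Wk"
      apply (clarsimp simp: def_equiv_iff[OF assms])
      subgoal for h h'
        by (rule exI[of _ "\<lambda>s. h s + h' s"]) (auto intro: holomorphic_intros simp: algebra_simps)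
      done
  qed
qed

lemma isCont_eq_if_eventually_eq:
  fixes f g :: "'a::{perfect_space, t2_space} \<Rightarrow> 'b::t2_space"
  assumes "isCont f a" "isCont g a" "\<forall>\<^sub>F x in at a. f x = g x"
  shows "f a = g a"
proof -
  have "(g \<longlongrightarrow> f a) (at a)"
    using tendsto_cong[OF assms(3)] assms(1) by (simp add: isCont_def)
  with assms(2) show ?thesis
    by (auto simp: isCont_def intro: tendsto_unique[OF at_neq_bot])
qed

lemma poly_eq_power_mult_imp_zero:
  fixes p :: "complex poly"
  assumes "degree p < n" "isCont u 0" "\<forall>\<^sub>F s in at 0. poly p s = s ^ n * u s"
  shows "p = 0"
proof (rule ccontr)
  assume "p \<noteq> 0"
  define m where "m = order 0 p"
  obtain q where p: "p = [:0, 1:] ^ m * q" and "poly q 0 \<noteq> 0"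
    using order_decomp[OF \<open>p \<noteq> 0\<close>, of 0] by (auto simp: m_def poly_eq_0_iff_dvd)
  have "m < n"
    using order_degree[OF \<open>p \<noteq> 0\<close>, of 0] assms(1) by (simp add: m_def)
  have "\<forall>\<^sub>F s in at 0. poly q s = s ^ (n - m) * u s"
    using assms(3) eventually_at_in_open[OF open_UNIV UNIV_I, of 0]
  proof eventually_elim
    case (elim s)
    then have "s ^ m * poly q s = s ^ m * (s ^ (n - m) * u s)"
      using \<open>m < n\<close> by (simp add: p poly_monom flip: power_add mult.assoc)
    with elim show ?case by simp
  qed
  then have "poly q 0 = 0 ^ (n - m) * u 0"
    by (rule isCont_eq_if_eventually_eq[rotated 2])
      (use assms(2) in \<open>auto intro: continuous_intros\<close>)
  with \<open>m < n\<close> \<open>poly q 0 \<noteq> 0\<close> show False by simp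
qed

lemma holomorphic_eq_value_plus_mult:
  assumes "f holomorphic_on S" "open S"
  shows "\<exists>v. v holomorphic_on S \<and> (\<forall>s. f s = f 0 + s * v s)"
  using pole_lemma_open[OF assms, of 0] by (intro exI conjI) auto

lemma holomorphic_eq_poly_plus_power_mult:
  assumes "f holomorphic_on S" "open S"
  shows "\<exists>q u. degree q \<le> n \<and> u holomorphic_on S \<and>
           (\<forall>s\<in>S. f s = poly q s + s ^ Suc n * u s)"
proof (induction n)
  case 0
  obtain v where v: "v holomorphic_on S" and fv: "\<forall>s. f s = f 0 + s * v s"
    using holomorphic_eq_value_plus_mult[OF assms] by blast
  have "f s = poly [:f 0:] s + s ^ Suc 0 * v s" for s
    using fv[rule_format, of s] by simp
  moreover have "degree [:f 0:] \<le> 0" by simp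
  ultimately show ?case using v by blast
next
  case (Suc n)
  then obtain q u where q: "degree q \<le> n" and u: "u holomorphic_on S"
    and f: "\<forall>s\<in>S. f s = poly q s + s ^ Suc n * u s" by blast
  obtain v where v: "v holomorphic_on S" and uv: "\<forall>s. u s = u 0 + s * v s"
    using holomorphic_eq_value_plus_mult[OF u assms(2)] by blast
  have "degree (q + monom (u 0) (Suc n)) \<le> Suc n"
    using q by (intro degree_add_le) (auto intro: order.trans[OF degree_monom_le])
  moreover have "f s = poly (q + monom (u 0) (Suc n)) s + s ^ Suc (Suc n) * v s" if "s \<in> S" for s
  proof -
    have "f s = poly q s + s ^ Suc n * (u 0 + s * v s)"
      using f that uv by metis
    then show ?thesis by (simp add: poly_monom distrib_left mult.commute mult.left_commute)
  qed
  ultimately show ?case using v by blast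
qed

definition lift_section ::
    "nat \<Rightarrow> tfam \<Rightarrow> tfam \<Rightarrow> (complex \<Rightarrow> complex) \<times> complex poly \<Rightarrow> tfam \<times> tfam"
  where "lift_section k Zk Wk = (\<lambda>(gk1, q).
     ((\<lambda>j. if j = Suc k then poly q else Zk j), (\<lambda>j. if j = Suc k then gk1 else Wk j)))"

lemma lift_section_in_local_defs:
  assumes "\<forall>j\<le>k. Zk j holomorphic_on U \<and> Wk j holomorphic_on U"
    and "\<forall>j>k. Zk j = (\<lambda>_. 0) \<and> Wk j = (\<lambda>_. 0)"
    and "x \<in> sections U a"
  shows "lift_section k Zk Wk x \<in> local_defs U k Zk Wk"
proof -
  obtain gk1 q where x: "x = (gk1, q)" by fastforce
  have "poly q holomorphic_on U" by (intro holomorphic_intros)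
  with assms show ?thesis
    by (auto simp: x lift_section_def local_defs_def sections_def le_Suc_eq)
qed

lemma deriv_monomial: "deriv (\<lambda>s. s ^ a) s = of_nat a * s ^ (a - 1)" for s :: complex
  by (rule DERIV_imp_deriv) (auto intro!: derivative_eq_intros)

lemma lift_section_eq_if_def_equiv:
  assumes "open U" "0 \<in> U" "2 \<le> a" "Zk 0 = (\<lambda>s. s ^ a)"
    and "\<forall>j\<le>k. Zk j holomorphic_on U \<and> Wk j holomorphic_on U"
    and "\<forall>j>k. Zk j = (\<lambda>_. 0) \<and> Wk j = (\<lambda>_. 0)"
    and x: "x \<in> sections U a" and y: "y \<in> sections U a"
    and equiv: "(lift_section k Zk Wk x, lift_section k Zk Wk y) \<in> def_equiv U k Zk Wk"
  shows "x = y"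
proof -
  obtain g1 q1 g2 q2 where xy: "x = (g1, q1)" "y = (g2, q2)" by fastforce
  have "\<exists>h. h holomorphic_on U \<and> (\<forall>s\<in>U.
      poly q2 s = poly q1 s + h s * (of_nat a * s ^ (a - 1)) \<and>
      g2 s = g1 s + h s * deriv (Wk 0) s)"
    using equiv unfolding def_equiv_iff[OF assms(1) lift_section_in_local_defs[OF assms(5,6) x]
        lift_section_in_local_defs[OF assms(5,6) y]]
    by (simp add: lift_section_def xy assms(4) deriv_monomial)
  then obtain h where h: "h holomorphic_on U" and e: "\<forall>s\<in>U.
      poly q2 s = poly q1 s + h s * (of_nat a * s ^ (a - 1)) \<and>
      g2 s = g1 s + h s * deriv (Wk 0) s"
    by blast
  have h_cont: "isCont h s" if "s \<in> U" for s
    using h assms(1) that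
    by (metis holomorphic_on_imp_continuous_on continuous_on_eq_continuous_at)
  have "\<forall>\<^sub>F s in at 0. poly (q2 - q1) s = s ^ (a - 1) * (of_nat a * h s)"
    using eventually_at_in_open'[OF assms(1,2)]
    by eventually_elim (use e in \<open>auto simp: algebra_simps\<close>)
  moreover have "degree (q2 - q1) < a - 1"
    using x y assms(3) degree_diff_le[of q2 "a - 2" q1] by (auto simp: xy sections_def)
  ultimately have "q2 - q1 = 0"
    by (intro poly_eq_power_mult_imp_zero[of _ _ "\<lambda>s. of_nat a * h s"])
      (use h_cont assms(2) in \<open>auto intro: continuous_intros\<close>)
  then have q: "q1 = q2" by simp
  have h_off_0: "h s = 0" if "s \<in> U" "s \<noteq> 0" for s
    using e that assms(3) by (auto simp: q)
  have "h 0 = 0"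
    using eventually_at_in_open[OF assms(1,2)] h_cont[OF assms(2)]
    by (intro isCont_eq_if_eventually_eq[where g = "\<lambda>_. 0"])
      (auto elim!: eventually_mono simp: h_off_0)
  with h_off_0 have "g1 s = g2 s" for s
    using e x y by (cases "s \<in> U") (auto simp: xy sections_def)
  then have "g1 = g2" ..
  with q xy show ?thesis by simp
qed

lemma ex_lift_section_def_equiv:
  assumes "open U" "2 \<le> a" "Zk 0 = (\<lambda>s. s ^ a)"
    and holo: "\<forall>j\<le>k. Zk j holomorphic_on U \<and> Wk j holomorphic_on U"
    and vanish: "\<forall>j>k. Zk j = (\<lambda>_. 0) \<and> Wk j = (\<lambda>_. 0)"
    and D: "D \<in> local_defs U k Zk Wk"
  shows "\<exists>x\<in>sections U a. (lift_section k Zk Wk x, D) \<in> def_equiv U k Zk Wk"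
proof -
  have Z: "fst D (Suc k) holomorphic_on U" and W: "snd D (Suc k) holomorphic_on U"
    using D by (auto simp: local_defs_def)
  obtain q u where q: "degree q \<le> a - 2" and u: "u holomorphic_on U"
    and Zqu: "\<forall>s\<in>U. fst D (Suc k) s = poly q s + s ^ Suc (a - 2) * u s"
    using holomorphic_eq_poly_plus_power_mult[OF Z assms(1)] by blast
  define h where "h s = u s / of_nat a" for s
  define g where "g s = (if s \<in> U then snd D (Suc k) s - h s * deriv (Wk 0) s else 0)" for s
  have h: "h holomorphic_on U"
    unfolding h_def using u assms(2) by (intro holomorphic_intros) auto
  have "deriv (Wk 0) holomorphic_on U"
    using holo assms(1) by (intro holomorphic_deriv) auto
  with W h have "(\<lambda>s. snd D (Suc k) s - h s * deriv (Wk 0) s) holomorphic_on U"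
    by (intro holomorphic_on_diff holomorphic_on_mult)
  then have "g holomorphic_on U"
    by (rule holomorphic_transform) (simp add: g_def)
  then have sec: "(g, q) \<in> sections U a"
    using q by (auto simp: sections_def g_def)
  have "Suc (a - 2) = a - 1" using assms(2) by simp
  then have "(lift_section k Zk Wk (g, q), D) \<in> def_equiv U k Zk Wk"
    using Zqu h assms(2)
    unfolding def_equiv_iff[OF assms(1) lift_section_in_local_defs[OF holo vanish sec] D]
    by (intro exI[of _ h]) (auto simp: lift_section_def g_def h_def assms(3) deriv_monomial)
  with sec show ?thesis by blast
qed

lemma bij_betw_lift_section_quotient:
  assumes "open U" "0 \<in> U" "2 \<le> a" "Zk 0 = (\<lambda>s. s ^ a)"
    and holo: "\<forall>j\<le>k. Zk j holomorphic_on U \<and> Wk j holomorphic_on U"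
    and vanish: "\<forall>j>k. Zk j = (\<lambda>_. 0) \<and> Wk j = (\<lambda>_. 0)"
  shows "bij_betw (\<lambda>x. def_equiv U k Zk Wk `` {lift_section k Zk Wk x})
           (sections U a) (local_defs U k Zk Wk // def_equiv U k Zk Wk)"
proof (rule bij_betwI')
  have eqv: "equiv (local_defs U k Zk Wk) (def_equiv U k Zk Wk)"
    by (rule equiv_def_equiv[OF assms(1)])
  show "(def_equiv U k Zk Wk `` {lift_section k Zk Wk x} =
         def_equiv U k Zk Wk `` {lift_section k Zk Wk y}) = (x = y)"
    if "x \<in> sections U a" "y \<in> sections U a" for x y
    using lift_section_eq_if_def_equiv[OF assms that]
      eq_equiv_class[OF _ eqv lift_section_in_local_defs[OF holo vanish that(2)]] by blast
  show "def_equiv U k Zk Wk `` {lift_section k Zk Wk x}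
          \<in> local_defs U k Zk Wk // def_equiv U k Zk Wk"
    if "x \<in> sections U a" for x
    using lift_section_in_local_defs[OF holo vanish that] by (rule quotientI)
  show "\<exists>x\<in>sections U a. X = def_equiv U k Zk Wk `` {lift_section k Zk Wk x}"
    if "X \<in> local_defs U k Zk Wk // def_equiv U k Zk Wk" for X
  proof -
    from that obtain D where X: "X = def_equiv U k Zk Wk `` {D}" and "D \<in> local_defs U k Zk Wk"
      by (rule quotientE)
    then obtain x where "x \<in> sections U a" "(lift_section k Zk Wk x, D) \<in> def_equiv U k Zk Wk"
      using ex_lift_section_def_equiv[OF assms(1,3,4) holo vanish] by blast
    with X show ?thesis using equiv_class_eq[OF eqv] by blast
  qed
qed

theorem mainTheorem6:
  fixes a b k :: nat and r :: real
    and g0 :: "complex \<Rightarrow> complex" and g :: "nat \<Rightarrow> complex \<Rightarrow> complex"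
    and c :: "nat \<Rightarrow> nat \<Rightarrow> complex"
    and Zk Wk :: tfam
  assumes "r > 0"
    and "2 \<le> a" and "a < b" and "\<not> a dvd b"
    and "g0 holomorphic_on ball 0 r"
    and "\<forall>j. 1 \<le> j \<and> j \<le> k \<longrightarrow> g j holomorphic_on ball 0 r"
    and "Zk = (\<lambda>j s. if j = 0 then s ^ a
                     else if j \<le> k then (\<Sum>i\<le>a - 2. c (a - i) j * s ^ i) else 0)"
    and "Wk = (\<lambda>j s. if j = 0 then s ^ b + s ^ (b + 1) * g0 s
                     else if j \<le> k then g j s else 0)"
  shows "equiv (local_defs (ball 0 r) k Zk Wk) (def_equiv (ball 0 r) k Zk Wk) \<and>
         bij_betw
           (\<lambda>(gk1, q). def_equiv (ball 0 r) k Zk Wk ``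
               {((\<lambda>j. if j = Suc k then poly q else Zk j),
                 (\<lambda>j. if j = Suc k then gk1 else Wk j))})
           (sections (ball 0 r) a)
           (local_defs (ball 0 r) k Zk Wk // def_equiv (ball 0 r) k Zk Wk)"
proof -
  \<comment> \<open>\<open>a < b\<close> and \<open>\<not> a dvd b\<close> only fix the type of the singularity; the
    classification uses nothing about \<open>W\<^sub>0\<close> beyond holomorphy.\<close>
  let ?U = "ball (0::complex) r"
  have Z0: "Zk 0 = (\<lambda>s. s ^ a)"
    using assms(7) by simp
  have holo: "\<forall>j\<le>k. Zk j holomorphic_on ?U \<and> Wk j holomorphic_on ?U"
  proof (intro allI impI)
    fix j assume "j \<le> k"
    then show "Zk j holomorphic_on ?U \<and> Wk j holomorphic_on ?U"
      using assms(5,6) by (cases "j = 0") (simp_all add: assms(7,8) holomorphic_intros)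
  qed
  have vanish: "\<forall>j>k. Zk j = (\<lambda>_. 0) \<and> Wk j = (\<lambda>_. 0)"
    by (simp add: assms(7,8))
  have "0 \<in> ?U"
    using assms(1) by simp
  from bij_betw_lift_section_quotient[OF open_ball this assms(2) Z0 holo vanish]
    equiv_def_equiv[OF open_ball]
  show ?thesis
    by (simp add: lift_section_def case_prod_unfold)
qed

end
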